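(* Assume $\Phi^{y,\mathrm{app}},\Phi^{y,\mathrm{enh}}\in L^1_{\mu_\theta}$. Then $$\max\{d_{\mathrm{KL}}(\mu^{y,\mathrm{app}}_\theta\Vert\mu^{y,\mathrm{enh}}_\theta),d_{\mathrm{KL}}(\mu^{y,\mathrm{enh}}_\theta\Vert\mu^{y,\mathrm{app}}_\theta)\}\le C\Big(|\mathcal{O}m_E|_{\Sigma_\varepsilon^{-1}}+\Big\|\,|y-\mathcal{O}\mathcal{M}-\mathcal{O}m_E|^2_{\Sigma_\varepsilon^{-1}-(\Sigma_\varepsilon+\Gamma_E)^{-1}}\Big\|_{L^1_{\mu_\theta}}\Big)$$ with $C=\exp\big(2\|\Phi^{y,\mathrm{app}}\|_{L^1_{\mu_\theta}}+2\|\Phi^{y,\mathrm{enh}}\|_{L^1_{\mu_\theta}}\big)\max\Big\{\sqrt2\big(\|\Phi^{y,\mathrm{app}}\|^{1/2}_{L^1_{\mu_\theta}}+C_{\mathrm{enh}}\|\Phi^{y,\mathrm{enh}}\|^{1/2}_{L^1_{\mu_\theta}}\big),1\Big\}$.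
   Context: Let $\Theta$ be a Borel subset of a separable Banach space and $\mu_\theta$ a Borel probability measure on $\Theta$. Let $\mathcal{U}$ be a Banach space, $n\in\mathbb{N}$, $\mathcal{O}:\mathcal{U}\to\mathbb{R}^n$ continuous linear, $\mathcal{M}:\Theta\to\mathcal{U}$ measurable. Let $\Sigma_\varepsilon\in\mathbb{R}^{n\times n}$ be symmetric positive definite and $y\in\mathbb{R}^n$ fixed. For symmetric positive semidefinite $L$, $|a|_L:=(a^\top La)^{1/2}$, and for symmetric $A,B$ write $|a|^2_{A-B}:=a^\top Aa-a^\top Ba$. Fix $m_E\in\mathcal{U}$ and a covariance operator $\Sigma_E$ of a Gaussian measure on $\mathcal{U}$; $\Gamma_E:=\mathcal{O}\Sigma_E\mathcal{O}^*$. Misfits: $\Phi^{y,\mathrm{app}}(\theta')=\tfrac12|y-\mathcal{O}\mathcal{M}(\theta')|^2_{\Sigma_\varepsilon^{-1}}$, $\Phi^{y,\mathrm{enh}}(\theta')=\tfrac12|y-\mathcal{O}\mathcal{M}(\theta')-\mathcal{O}m_E|^2_{(\Sigma_\varepsilon+\Gamma_E)^{-1}}$. $C_{\mathrm{enh}}:=\|\Sigma_\varepsilon^{-1/2}(\Sigma_\varepsilon+\Gamma_E)^{1/2}\|_{\mathrm{op}}$. For a probability measure $\mu$ and measurable $\Phi\ge0$, $\mu_\Phi$ has density $\exp(-\Phi)/\int\exp(-\Phi)d\mu$ w.r.t. $\mu$. $\mu^{y,\mathrm{app}}_\theta:=(\mu_\theta)_{\Phi^{y,\mathrm{app}}}$,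 $\mu^{y,\mathrm{enh}}_\theta:=(\mu_\theta)_{\Phi^{y,\mathrm{enh}}}$. $d_{\mathrm{KL}}(\mu\Vert\nu)=\int\log\frac{d\mu}{d\nu}d\mu$ if $\mu\ll\nu$, $+\infty$ otherwise. *)

theory Defs
  imports "HOL-Probability.Probability"
begin

definition wnorm :: "real^'n^'n \<Rightarrow> real^'n \<Rightarrow> real" where
  "wnorm L a = sqrt (a \<bullet> (L *v a))"

definition wsq_diff :: "real^'n^'n \<Rightarrow> real^'n^'n \<Rightarrow> real^'n \<Rightarrow> real" where
  "wsq_diff A B a = a \<bullet> (A *v a) - a \<bullet> (B *v a)"

definition sym_mat :: "real^'n^'n \<Rightarrow> bool" where
  "sym_mat A \<longleftrightarrow> transpose A = A"

definition pos_def_mat :: "real^'n^'n \<Rightarrow> bool" where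
  "pos_def_mat A \<longleftrightarrow> sym_mat A \<and> (\<forall>x. x \<noteq> 0 \<longrightarrow> 0 < x \<bullet> (A *v x))"

definition psd_mat :: "real^'n^'n \<Rightarrow> bool" where
  "psd_mat A \<longleftrightarrow> sym_mat A \<and> (\<forall>x. 0 \<le> x \<bullet> (A *v x))"

definition psd_sqrt :: "real^'n^'n \<Rightarrow> real^'n^'n" where
  "psd_sqrt A = (THE S. psd_mat S \<and> S ** S = A)"

definition op_norm :: "real^'n^'m \<Rightarrow> real" where
  "op_norm A = onorm (\<lambda>x. A *v x)"

definition gaussian_measure :: "'u::real_normed_vector measure \<Rightarrow> bool" where
  "gaussian_measure G \<longleftrightarrow> prob_space G \<and> sets G = sets borel \<and>
     (\<forall>l::'u \<Rightarrow> real. bounded_linear l \<longrightarrow>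
        (\<exists>m s. 0 < s \<and> distributed G lborel l (\<lambda>x. ennreal (normal_density m s x)))
        \<or> (\<exists>c. AE u in G. l u = c))"

definition cov_form :: "'u measure \<Rightarrow> ('u \<Rightarrow> real) \<Rightarrow> ('u \<Rightarrow> real) \<Rightarrow> real" where
  "cov_form G l l' =
     (\<integral>u. (l u - (\<integral>v. l v \<partial>G)) * (l' u - (\<integral>v. l' v \<partial>G)) \<partial>G)"

text \<open>Gamma_E = O Sigma_E O^*, where Sigma_E is the covariance operator of G:
  its (i,j) entry is Sigma_E(e_i o O, e_j o O).\<close>
definition Gamma_mat :: "('u \<Rightarrow> real^'n) \<Rightarrow> 'u measure \<Rightarrow> real^'n^'n" where
  "Gamma_mat Obs G = (\<chi> i j. cov_form G (\<lambda>u. Obs u $ i) (\<lambda>u. Obs u $ j))"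

definition reweight :: "'a measure \<Rightarrow> ('a \<Rightarrow> real) \<Rightarrow> 'a measure" where
  "reweight \<mu> \<Phi> = density \<mu> (\<lambda>x. ennreal (exp (- \<Phi> x) / (\<integral>z. exp (- \<Phi> z) \<partial>\<mu>)))"

definition d_KL :: "'a measure \<Rightarrow> 'a measure \<Rightarrow> ereal" where
  "d_KL \<mu> \<nu> =
    (if sets \<mu> = sets \<nu> \<and> absolutely_continuous \<nu> \<mu> then
       (let f = (\<lambda>x. enn2real (RN_deriv \<nu> \<mu> x)) in
          enn2ereal (\<integral>\<^sup>+ x. ennreal (max 0 (ln (f x))) \<partial>\<mu>)
          - enn2ereal (\<integral>\<^sup>+ x. ennreal (max 0 (- ln (f x))) \<partial>\<mu>))
     else \<infinity>)"

end

theory Submission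
  imports Defs
begin

text \<open>Both posteriors reweight the same prior, so the log-density of one with respect to the
  other is the difference of the misfits plus a difference of log-normalizers. Each normalizer
  lies between exp(-\<parallel>\<Phi>\<parallel>) and 1, hence both KL divergences are bounded by
  2 exp(2\<parallel>\<Phi>app\<parallel> + 2\<parallel>\<Phi>enh\<parallel>) \<parallel>\<Phi>app - \<Phi>enh\<parallel>, all norms in L1 of the prior.
  With r = y - O M, the misfit difference splits into
  |r|^2/2 - |r - O mE|^2/2 in the \<Sigma>\<inverse>-norm, bounded by |O mE| (|r| + |r - O mE|), and the change of
  weight |r - O mE|^2 with respect to \<Sigma>\<inverse> - (\<Sigma> + \<Gamma>)\<inverse>. Finally |v| in the \<Sigma>\<inverse>-norm is at most
  Cenh times |v| in the (\<Sigma> + \<Gamma>)\<inverse>-norm, and the mean of a square root is at most the square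
  root of the mean. The matrix square roots entering Cenh exist and are unique; existence uses
  the monotone iteration W \<mapsto> (B + W^2)/2, which converges to I - (I - B)^(1/2).\<close>

section \<open>Symmetric and positive semidefinite matrices\<close>

lemma sym_mat_inner_commute:
  assumes "sym_mat A" shows "x \<bullet> (A *v y) = (A *v x) \<bullet> y"
proof -
  have "x \<bullet> (A *v y) = (x v* A) \<bullet> y" by (simp add: dot_lmul_matrix)
  also have "x v* A = transpose A *v x" by simp
  also have "transpose A = A" using assms by (simp add: sym_mat_def)
  finally show ?thesis .
qed

lemma psd_mat_cauchy_schwarz:
  fixes A :: "real^'n^'n"
  assumes "psd_mat A"
  shows "(x \<bullet> (A *v y))\<^sup>2 \<le> (x \<bullet> (A *v x)) * (y \<bullet> (A *v y))"
proof -
  define a b c where "a = x \<bullet> (A *v x)" and "b = x \<bullet> (A *v y)" and "c = y \<bullet> (A *v y)"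
  have quadratic_nonneg: "0 \<le> a + 2*t*b + t*t*c" for t
  proof -
    have "y \<bullet> (A *v x) = b"
      using sym_mat_inner_commute[of A y x] assms by (simp add: b_def psd_mat_def inner_commute)
    moreover have "0 \<le> (x + t *\<^sub>R y) \<bullet> (A *v (x + t *\<^sub>R y))" using assms by (simp add: psd_mat_def)
    ultimately show ?thesis
      by (simp add: a_def b_def c_def algebra_simps inner_add_left inner_add_right
          matrix_vector_right_distrib)
  qed
  have "0 \<le> c" using assms by (simp add: psd_mat_def c_def)
  show ?thesis
  proof (cases "c = 0")
    case True
    have "b = 0"
    proof (rule ccontr)
      assume "b \<noteq> 0"
      have "0 \<le> a + 2 * (-(a+1)/(2*b)) * b" using quadratic_nonneg[of "-(a+1)/(2*b)"] True by simp
      also have "\<dots> = -1" using \<open>b \<noteq> 0\<close> by (simp add: field_simps)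
      finally show False by simp
    qed
    then show ?thesis by (simp flip: a_def b_def c_def add: True)
  next
    case False
    with \<open>0 \<le> c\<close> have "0 < c" by simp
    have "0 \<le> a + 2 * (-b/c) * b + (-b/c)*(-b/c)*c" by (rule quadratic_nonneg)
    also have "\<dots> = a - b^2/c" using \<open>0 < c\<close> by (simp add: field_simps power2_eq_square)
    finally have "b^2 \<le> a * c" using \<open>0 < c\<close> by (simp add: divide_le_eq)
    then show ?thesis by (simp add: a_def b_def c_def)
  qed
qed

lemma psd_mat_mult_eq_0_of_form_eq_0:
  fixes A :: "real^'n^'n"
  assumes "psd_mat A" "x \<bullet> (A *v x) = 0"
  shows "A *v x = 0"
proof -
  have "(x \<bullet> (A *v (A *v x)))\<^sup>2 \<le> 0"
    using psd_mat_cauchy_schwarz[OF assms(1), of x "A *v x"] assms(2) by simp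
  moreover have "x \<bullet> (A *v (A *v x)) = (A *v x) \<bullet> (A *v x)"
    using sym_mat_inner_commute[of A x "A *v x"] assms(1) by (simp add: psd_mat_def)
  ultimately show ?thesis by simp
qed

lemma matrix_add_rdistrib: "((A::real^'n^'m) + B) ** C = A ** C + B ** C"
  by (vector matrix_matrix_mult_def sum.distrib[symmetric] field_simps)

lemma matrix_diff_ldistrib: "(A::real^'n^'m) ** (B - C) = A ** B - A ** C"
  by (vector matrix_matrix_mult_def sum_subtractf[symmetric] field_simps)

lemma matrix_diff_rdistrib: "((A::real^'n^'m) - B) ** C = A ** C - B ** C"
  by (vector matrix_matrix_mult_def sum_subtractf[symmetric] field_simps)

lemma transpose_add: "transpose ((A::real^'n^'m) + B) = transpose A + transpose B"
  by (simp add: transpose_def vec_eq_iff)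

lemma transpose_diff: "transpose ((A::real^'n^'m) - B) = transpose A - transpose B"
  by (simp add: transpose_def vec_eq_iff)

lemma matrix_entry_eq_inner: "(M::real^'n^'n) $ i $ j = axis i 1 \<bullet> (M *v axis j 1)"
  by (simp add: matrix_vector_mul_component inner_axis' inner_axis)

lemma sym_mat_polarization:
  assumes "sym_mat M"
  shows "u \<bullet> (M *v v) = ((u+v) \<bullet> (M *v (u+v)) - (u-v) \<bullet> (M *v (u-v))) / 4"
proof -
  have "v \<bullet> (M *v u) = u \<bullet> (M *v v)"
    using sym_mat_inner_commute[OF assms, of v u] by (simp add: inner_commute)
  then show ?thesis
    by (simp add: matrix_vector_right_distrib matrix_vector_mult_diff_distrib
        inner_add_left inner_add_right inner_diff_left inner_diff_right algebra_simps)
qed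

lemma tendsto_matrix_mult:
  fixes f g :: "'a \<Rightarrow> real^'n^'n"
  assumes "(f \<longlongrightarrow> A) F" "(g \<longlongrightarrow> C) F"
  shows "((\<lambda>k. f k ** g k) \<longlongrightarrow> A ** C) F"
  unfolding matrix_matrix_mult_def
  by (intro vec_tendstoI) (simp, intro tendsto_sum tendsto_mult tendsto_vec_nth assms)

lemma tendsto_matrix_vector_mult:
  fixes f :: "'a \<Rightarrow> real^'n^'n"
  assumes "(f \<longlongrightarrow> A) F"
  shows "((\<lambda>k. f k *v x) \<longlongrightarrow> A *v x) F"
  unfolding matrix_vector_mult_def
  by (intro vec_tendstoI) (simp, intro tendsto_sum tendsto_mult tendsto_vec_nth assms tendsto_const)

lemma tendsto_transpose:
  fixes f :: "'a \<Rightarrow> real^'n^'n"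
  assumes "(f \<longlongrightarrow> A) F"
  shows "((\<lambda>k. transpose (f k)) \<longlongrightarrow> transpose A) F"
  unfolding transpose_def by (intro vec_tendstoI) (simp, intro tendsto_vec_nth assms)

fun matpow :: "real^'n^'n \<Rightarrow> nat \<Rightarrow> real^'n^'n" where
  "matpow B 0 = mat 1"
| "matpow B (Suc j) = B ** matpow B j"

lemma matpow_add: "matpow B (i + j) = matpow B i ** matpow B j"
  by (induction i) (simp_all add: matrix_mul_assoc)

lemma matpow_commute: "B ** matpow B j = matpow B j ** B"
  using matpow_add[of B j 1] by simp

lemma sym_mat_matpow: assumes "sym_mat B" shows "sym_mat (matpow B j)"
proof (induction j)
  case (Suc j)
  have "transpose (B ** matpow B j) = matpow B j ** B"
    using Suc assms by (simp add: matrix_transpose_mul sym_mat_def)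
  then show ?case by (simp add: sym_mat_def matpow_commute)
qed (simp add: sym_mat_def)

lemma psd_form_matpow_nonneg: assumes "psd_mat B" shows "0 \<le> x \<bullet> (matpow B j *v x)"
proof -
  have sym: "sym_mat (matpow B m)" for m using sym_mat_matpow[of B m] assms by (simp add: psd_mat_def)
  define m where "m = j div 2"
  have "j = m + m \<or> j = m + 1 + m" unfolding m_def by presburger
  then show ?thesis
  proof
    assume "j = m + m"
    then have "x \<bullet> (matpow B j *v x) = x \<bullet> (matpow B m *v (matpow B m *v x))"
      by (simp add: matpow_add matrix_vector_mul_assoc)
    also have "\<dots> = (matpow B m *v x) \<bullet> (matpow B m *v x)"
      by (rule sym_mat_inner_commute[OF sym])
    finally show ?thesis by simp
  next
    assume "j = m + 1 + m"
    then have "matpow B j = (matpow B m ** B) ** matpow B m" by (simp only: matpow_add) simp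
    then have "x \<bullet> (matpow B j *v x) = x \<bullet> (matpow B m *v (B *v (matpow B m *v x)))"
      by (simp only: matrix_vector_mul_assoc matrix_mul_assoc)
    also have "\<dots> = (matpow B m *v x) \<bullet> (B *v (matpow B m *v x))"
      by (rule sym_mat_inner_commute[OF sym])
    finally show ?thesis using assms by (simp add: psd_mat_def)
  qed
qed

inductive_set nonneg_polys :: "real^'n^'n \<Rightarrow> (real^'n^'n) set" for B where
  matpow: "matpow B j \<in> nonneg_polys B"
| add: "M \<in> nonneg_polys B \<Longrightarrow> N \<in> nonneg_polys B \<Longrightarrow> M + N \<in> nonneg_polys B"
| scaleR: "M \<in> nonneg_polys B \<Longrightarrow> 0 \<le> c \<Longrightarrow> c *\<^sub>R M \<in> nonneg_polys B"

lemma nonneg_polys_self: "B \<in> nonneg_polys B"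
  using nonneg_polys.matpow[of B 1] by simp

lemma nonneg_polys_zero: "0 \<in> nonneg_polys B"
  using nonneg_polys.scaleR[OF nonneg_polys.matpow[of B 0], of 0] by simp

lemma nonneg_polys_mult:
  assumes "M \<in> nonneg_polys B" "N \<in> nonneg_polys B" shows "M ** N \<in> nonneg_polys B"
  using assms
proof (induction M rule: nonneg_polys.induct)
  case (matpow j)
  from matpow.prems show ?case
  proof (induction N rule: nonneg_polys.induct)
    case (matpow i) then show ?case using nonneg_polys.matpow[of B "j+i"] by (simp add: matpow_add)
  next
    case (add M N) then show ?case by (simp add: matrix_add_ldistrib nonneg_polys.add)
  next
    case (scaleR M c) then show ?case
      by (simp add: matrix_scalar_ac scalar_matrix_assoc[symmetric] nonneg_polys.scaleR)
  qed
next
  case (add M1 M2) then show ?case by (simp add: matrix_add_rdistrib nonneg_polys.add)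
next
  case (scaleR M c) then show ?case
    by (simp add: scalar_matrix_assoc[symmetric] nonneg_polys.scaleR)
qed

lemma nonneg_polys_commute:
  assumes "M \<in> nonneg_polys B" "N \<in> nonneg_polys B" shows "M ** N = N ** M"
  using assms
proof (induction M rule: nonneg_polys.induct)
  case (matpow j)
  from matpow.prems show ?case
  proof (induction N rule: nonneg_polys.induct)
    case (matpow i) then show ?case by (metis add.commute matpow_add)
  next
    case (add M N) then show ?case by (simp add: matrix_add_ldistrib matrix_add_rdistrib)
  next
    case (scaleR M c) then show ?case by (simp add: matrix_scalar_ac scalar_matrix_assoc[symmetric])
  qed
next
  case (add M1 M2) then show ?case by (simp add: matrix_add_ldistrib matrix_add_rdistrib)
next
  case (scaleR M c) then show ?case by (simp add: matrix_scalar_ac scalar_matrix_assoc[symmetric])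
qed

lemma psd_mat_nonneg_polys: assumes "psd_mat B" "M \<in> nonneg_polys B" shows "psd_mat M"
  using assms(2)
proof (induction M rule: nonneg_polys.induct)
  case (matpow j)
  then show ?case
    using assms(1) sym_mat_matpow[of B j] psd_form_matpow_nonneg[OF assms(1)] by (simp add: psd_mat_def)
next
  case (add M N) then show ?case
    by (simp add: psd_mat_def sym_mat_def transpose_add matrix_vector_mult_add_rdistrib inner_add_right)
next
  case (scaleR M c) then show ?case
    by (simp add: psd_mat_def sym_mat_def transpose_scalar scaleR_matrix_vector_assoc[symmetric])
qed

section \<open>Square roots of positive semidefinite matrices\<close>

text \<open>For a positive semidefinite contraction B, the iterates W(k+1) = (B + W(k)^2)/2 increase to
  I - (I - B)^(1/2); every iterate and every increment is a nonnegative polynomial in B, because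
  W(k+2) - W(k+1) = (W(k+1) + W(k)) (W(k+1) - W(k)) / 2.\<close>
fun sqrt_iter :: "real^'n^'n \<Rightarrow> nat \<Rightarrow> real^'n^'n" where
  "sqrt_iter B 0 = 0"
| "sqrt_iter B (Suc k) = (1/2) *\<^sub>R (B + sqrt_iter B k ** sqrt_iter B k)"

lemma sqrt_iter_in_nonneg_polys: "sqrt_iter B k \<in> nonneg_polys B"
  by (induction k) (auto intro!: nonneg_polys_zero nonneg_polys_self nonneg_polys_mult
      nonneg_polys.add nonneg_polys.scaleR)

lemma sqrt_iter_increment_in_nonneg_polys: "sqrt_iter B (Suc k) - sqrt_iter B k \<in> nonneg_polys B"
proof (induction k)
  case 0 then show ?case by (auto intro!: nonneg_polys.scaleR nonneg_polys_self)
next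
  case (Suc k)
  define W0 W1 where "W0 = sqrt_iter B k" and "W1 = sqrt_iter B (Suc k)"
  have polys: "W0 \<in> nonneg_polys B" "W1 \<in> nonneg_polys B"
    unfolding W0_def W1_def by (rule sqrt_iter_in_nonneg_polys)+
  have "W1 ** W0 = W0 ** W1" by (rule nonneg_polys_commute[OF polys(2,1)])
  then have "(W1 + W0) ** (W1 - W0) = W1 ** W1 - W0 ** W0"
    by (simp add: matrix_diff_ldistrib matrix_add_rdistrib)
  moreover have "sqrt_iter B (Suc (Suc k)) - sqrt_iter B (Suc k) = (1/2) *\<^sub>R (W1 ** W1 - W0 ** W0)"
    by (simp add: W0_def W1_def[symmetric]) (simp add: W1_def algebra_simps)
  ultimately have "sqrt_iter B (Suc (Suc k)) - sqrt_iter B (Suc k) = (1/2) *\<^sub>R ((W1 + W0) ** (W1 - W0))"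
    by simp
  also have "\<dots> \<in> nonneg_polys B"
    using Suc polys by (auto simp: W0_def W1_def intro!: nonneg_polys.scaleR nonneg_polys_mult
        nonneg_polys.add)
  finally show ?case .
qed

lemma norm_sqrt_iter_le:
  assumes "\<And>x. norm (B *v x) \<le> norm x"
  shows "norm (sqrt_iter B k *v x) \<le> norm x"
proof (induction k arbitrary: x)
  case (Suc k)
  have "norm (sqrt_iter B (Suc k) *v x)
        \<le> (1/2) * (norm (B *v x) + norm (sqrt_iter B k *v (sqrt_iter B k *v x)))"
    by (simp add: scaleR_matrix_vector_assoc[symmetric] matrix_vector_mult_add_rdistrib
        matrix_vector_mul_assoc norm_triangle_ineq)
  also have "\<dots> \<le> norm x"
    using assms[of x] Suc[of "sqrt_iter B k *v x"] Suc[of x] by simp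
  finally show ?case .
qed simp

lemma form_sqrt_iter_le:
  assumes "\<And>x. norm (B *v x) \<le> norm x"
  shows "x \<bullet> (sqrt_iter B k *v x) \<le> x \<bullet> x"
proof -
  have "x \<bullet> (sqrt_iter B k *v x) \<le> norm x * norm (sqrt_iter B k *v x)"
    by (simp add: norm_cauchy_schwarz)
  also have "\<dots> \<le> norm x * norm x"
    by (intro mult_left_mono norm_sqrt_iter_le assms) simp
  finally show ?thesis by (simp add: dot_square_norm power2_eq_square)
qed

lemma convergent_form_sqrt_iter:
  assumes "psd_mat B" "\<And>x. norm (B *v x) \<le> norm x"
  shows "convergent (\<lambda>k. x \<bullet> (sqrt_iter B k *v x))"
proof -
  have inc: "incseq (\<lambda>k. x \<bullet> (sqrt_iter B k *v x))"
  proof (rule incseq_SucI)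
    fix k
    have "0 \<le> x \<bullet> ((sqrt_iter B (Suc k) - sqrt_iter B k) *v x)"
      using psd_mat_nonneg_polys[OF assms(1) sqrt_iter_increment_in_nonneg_polys]
      by (simp add: psd_mat_def)
    then show "x \<bullet> (sqrt_iter B k *v x) \<le> x \<bullet> (sqrt_iter B (Suc k) *v x)"
      by (simp add: matrix_vector_mult_diff_rdistrib inner_diff_right)
  qed
  obtain L where "(\<lambda>k. x \<bullet> (sqrt_iter B k *v x)) \<longlonglongrightarrow> L"
    by (rule incseq_convergent[OF inc, of "x \<bullet> x"]) (auto simp: form_sqrt_iter_le[OF assms(2)])
  then show ?thesis by (auto simp: convergent_def)
qed

lemma sqrt_iter_converges:
  fixes B :: "real^'n^'n"
  assumes "psd_mat B" "\<And>x. norm (B *v x) \<le> norm x"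
  shows "\<exists>W. sqrt_iter B \<longlonglongrightarrow> W"
proof -
  define Q where "Q x = lim (\<lambda>k. x \<bullet> (sqrt_iter B k *v x))" for x :: "real^'n"
  have Q: "(\<lambda>k. x \<bullet> (sqrt_iter B k *v x)) \<longlonglongrightarrow> Q x" for x
    using convergent_form_sqrt_iter[OF assms] unfolding Q_def by (simp add: convergent_LIMSEQ_iff)
  have sym: "sym_mat (sqrt_iter B k)" for k
    using psd_mat_nonneg_polys[OF assms(1) sqrt_iter_in_nonneg_polys] by (simp add: psd_mat_def)
  define W :: "real^'n^'n" where "W = (\<chi> i j. (Q (axis i 1 + axis j 1) - Q (axis i 1 - axis j 1)) / 4)"
  have "sqrt_iter B \<longlonglongrightarrow> W"
  proof (intro vec_tendstoI)
    fix i j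
    have "(\<lambda>k. sqrt_iter B k $ i $ j) = (\<lambda>k. ((axis i 1 + axis j 1) \<bullet> (sqrt_iter B k *v (axis i 1 + axis j 1))
        - (axis i 1 - axis j 1) \<bullet> (sqrt_iter B k *v (axis i 1 - axis j 1))) / 4)"
      by (subst matrix_entry_eq_inner, subst sym_mat_polarization[OF sym], rule refl)
    also have "\<dots> \<longlonglongrightarrow> W $ i $ j"
      unfolding W_def by (simp, intro tendsto_intros Q, simp)
    finally show "(\<lambda>k. sqrt_iter B k $ i $ j) \<longlonglongrightarrow> W $ i $ j" .
  qed
  then show ?thesis by blast
qed

lemma psd_sqrt_of_contraction:
  assumes "psd_mat B" "\<And>x. norm (B *v x) \<le> norm x"
  shows "\<exists>S. psd_mat S \<and> S ** S = mat 1 - B"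
proof -
  obtain W where W: "sqrt_iter B \<longlonglongrightarrow> W" using sqrt_iter_converges[OF assms] by blast
  have "(\<lambda>k. sqrt_iter B (Suc k)) \<longlonglongrightarrow> (1/2) *\<^sub>R (B + W ** W)"
    by (simp, intro tendsto_intros tendsto_matrix_mult W)
  with LIMSEQ_Suc[OF W] have fixpoint: "W = (1/2) *\<^sub>R (B + W ** W)" by (rule LIMSEQ_unique)
  have "(\<lambda>k. transpose (sqrt_iter B k)) = sqrt_iter B"
    using psd_mat_nonneg_polys[OF assms(1) sqrt_iter_in_nonneg_polys]
    by (simp add: psd_mat_def sym_mat_def)
  then have "transpose W = W" using tendsto_transpose[OF W] W by (metis LIMSEQ_unique)
  moreover have "x \<bullet> (W *v x) \<le> x \<bullet> x" for x
  proof (rule LIMSEQ_le_const2)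
    show "(\<lambda>k. x \<bullet> (sqrt_iter B k *v x)) \<longlonglongrightarrow> x \<bullet> (W *v x)"
      by (intro tendsto_intros tendsto_matrix_vector_mult W)
  qed (use form_sqrt_iter_le[OF assms(2)] in blast)
  ultimately have "psd_mat (mat 1 - W)"
    by (simp add: psd_mat_def sym_mat_def transpose_diff matrix_vector_mult_diff_rdistrib
        inner_diff_right)
  moreover have "W ** W = 2 *\<^sub>R W - B"
    using arg_cong[OF fixpoint, of "\<lambda>M. 2 *\<^sub>R M"] by (simp add: algebra_simps)
  then have "(mat 1 - W) ** (mat 1 - W) = mat 1 - B"
    by (simp add: matrix_diff_ldistrib matrix_diff_rdistrib algebra_simps scaleR_2)
  ultimately show ?thesis by blast
qed
lemma psd_mat_norm_le_of_form_le:
  assumes "psd_mat B" "\<And>x. x \<bullet> (B *v x) \<le> x \<bullet> x"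
  shows "norm (B *v x) \<le> norm x"
proof -
  define v where "v = B *v x"
  have "x \<bullet> (B *v v) = v \<bullet> v"
    using sym_mat_inner_commute[of B x v] assms(1) by (simp add: v_def psd_mat_def)
  then have "(v \<bullet> v)\<^sup>2 \<le> (x \<bullet> (B *v x)) * (v \<bullet> (B *v v))"
    using psd_mat_cauchy_schwarz[OF assms(1), of x v] by simp
  also have "\<dots> \<le> (x \<bullet> x) * (v \<bullet> v)"
    using assms by (intro mult_mono) (auto simp: psd_mat_def)
  finally have "v \<bullet> v \<le> x \<bullet> x"
    by (cases "v \<bullet> v = 0") (auto simp: power2_eq_square mult_le_cancel_right)
  then show ?thesis by (simp add: v_def dot_square_norm)
qed

text \<open>Rescaling A to norm below 1 reduces the existence of square roots to the contraction
  I - A/c.\<close>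
lemma psd_sqrt_exists:
  fixes A :: "real^'n^'n"
  assumes "psd_mat A"
  shows "\<exists>S. psd_mat S \<and> S ** S = A"
proof -
  define c where "c = onorm ((*v) A) + 1"
  have "0 \<le> onorm ((*v) A)" by (rule onorm_pos_le) simp
  then have "0 < c" by (simp add: c_def)
  have form_A_le: "x \<bullet> (A *v x) \<le> c * (x \<bullet> x)" for x
  proof -
    have "x \<bullet> (A *v x) \<le> norm x * (onorm ((*v) A) * norm x)"
      by (intro order_trans[OF norm_cauchy_schwarz] mult_left_mono onorm) simp_all
    also have "\<dots> \<le> norm x * (c * norm x)"
      by (intro mult_left_mono) (simp_all add: c_def algebra_simps)
    finally show ?thesis by (simp add: dot_square_norm power2_eq_square algebra_simps)
  qed
  define B where "B = mat 1 - (1/c) *\<^sub>R A"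
  have form_B: "x \<bullet> (B *v x) = x \<bullet> x - (1/c) * (x \<bullet> (A *v x))" for x
    by (simp add: B_def matrix_vector_mult_diff_rdistrib scaleR_matrix_vector_assoc[symmetric]
        inner_diff_right)
  have "sym_mat B" using assms by (simp add: B_def psd_mat_def sym_mat_def transpose_diff transpose_scalar)
  moreover have "0 \<le> x \<bullet> (B *v x)" for x
    using form_A_le[of x] \<open>0 < c\<close> by (simp add: form_B field_simps)
  ultimately have psd_B: "psd_mat B" by (simp add: psd_mat_def)
  have "x \<bullet> (B *v x) \<le> x \<bullet> x" for x
    using assms \<open>0 < c\<close> by (simp add: form_B psd_mat_def)
  then obtain S where S: "psd_mat S" "S ** S = mat 1 - B"
    using psd_sqrt_of_contraction[OF psd_B psd_mat_norm_le_of_form_le[OF psd_B]] by blast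
  then have "S ** S = (1/c) *\<^sub>R A" by (simp add: B_def)
  have "(sqrt c *\<^sub>R S) ** (sqrt c *\<^sub>R S) = A"
    using \<open>S ** S = (1/c) *\<^sub>R A\<close> \<open>0 < c\<close> by (simp add: matrix_scalar_ac scalar_matrix_assoc[symmetric])
  moreover have "psd_mat (sqrt c *\<^sub>R S)"
    using S(1) \<open>0 < c\<close>
    by (simp add: psd_mat_def sym_mat_def transpose_scalar scaleR_matrix_vector_assoc[symmetric])
  ultimately show ?thesis by blast
qed

text \<open>If S^2 = T^2 and D = S - T, then D S D + D T D has trace 0, so both psd summands vanish,
  which forces S D = T D = 0 and hence D^2 = 0.\<close>
lemma psd_sqrt_unique:
  fixes S T :: "real^'n^'n"
  assumes S: "psd_mat S" and T: "psd_mat T" and eq: "S ** S = T ** T"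
  shows "S = T"
proof -
  define D where "D = S - T"
  have symD: "sym_mat D" using S T by (simp add: D_def psd_mat_def sym_mat_def transpose_diff)
  have diag: "(D ** P ** D) $ i $ i = (D *v axis i 1) \<bullet> (P *v (D *v axis i 1))" for P i
    by (subst matrix_entry_eq_inner, simp add: matrix_vector_mul_assoc[symmetric]
        sym_mat_inner_commute[OF symD])
  have diag_nonneg: "psd_mat P \<Longrightarrow> 0 \<le> (D ** P ** D) $ i $ i" for P i
    by (simp add: diag psd_mat_def)
  have "S ** D + D ** T = 0"
    using eq by (simp add: D_def matrix_diff_ldistrib matrix_diff_rdistrib)
  then have "D ** (S ** D + D ** T) = 0" by simp
  then have "trace (D ** S ** D + D ** D ** T) = 0"
    by (simp add: matrix_add_ldistrib matrix_mul_assoc trace_def)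
  then have "trace (D ** S ** D) + trace (D ** D ** T) = 0" by (simp add: trace_add)
  moreover have "trace (D ** D ** T) = trace (D ** T ** D)"
    using trace_mul_sym[of "D ** D" T] trace_mul_sym[of "T ** D" D] by (simp add: matrix_mul_assoc)
  ultimately have "trace (D ** S ** D) + trace (D ** T ** D) = 0" by simp
  then have "\<forall>i. (D ** S ** D) $ i $ i = 0 \<and> (D ** T ** D) $ i $ i = 0"
    unfolding trace_def
    by (subst (asm) add_nonneg_eq_0_iff) (auto simp: sum_nonneg_eq_0_iff diag_nonneg S T sum_nonneg)
  then have "S *v (D *v axis i 1) = 0 \<and> T *v (D *v axis i 1) = 0" for i
    using psd_mat_mult_eq_0_of_form_eq_0[OF S] psd_mat_mult_eq_0_of_form_eq_0[OF T]
    by (simp add: diag)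
  then have "D *v (D *v axis i 1) = 0" for i by (simp add: D_def matrix_vector_mult_diff_rdistrib)
  then have "(D *v axis i 1) \<bullet> (D *v axis i 1) = 0" for i
    using sym_mat_inner_commute[OF symD, of "axis i 1" "D *v axis i 1"] by simp
  then have "D = 0" by (simp add: vec_eq_iff matrix_entry_eq_inner[of D] inner_axis')
  then show ?thesis by (simp add: D_def)
qed

lemma psd_sqrt:
  fixes A :: "real^'n^'n"
  assumes "psd_mat A"
  shows "psd_mat (psd_sqrt A)" "psd_sqrt A ** psd_sqrt A = A"
proof -
  have "\<exists>!S. psd_mat S \<and> S ** S = A"
    by (rule ex_ex1I) (use psd_sqrt_exists[OF assms] psd_sqrt_unique in auto)
  then have "psd_mat (psd_sqrt A) \<and> psd_sqrt A ** psd_sqrt A = A"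
    unfolding psd_sqrt_def by (rule theI')
  then show "psd_mat (psd_sqrt A)" "psd_sqrt A ** psd_sqrt A = A" by auto
qed

section \<open>Positive definite matrices and weighted norms\<close>

lemma psd_mat_if_pos_def_mat: "pos_def_mat A \<Longrightarrow> psd_mat (A::real^'n^'n)"
  unfolding pos_def_mat_def psd_mat_def by (metis inner_zero_left order_less_imp_le order_refl)

lemma pos_def_mat_add_psd_mat:
  fixes A B :: "real^'n^'n"
  assumes "pos_def_mat A" "psd_mat B"
  shows "pos_def_mat (A + B)"
  using assms
  by (fastforce simp: pos_def_mat_def psd_mat_def sym_mat_def transpose_add
       matrix_vector_mult_add_rdistrib inner_add_right add_pos_nonneg)

lemma invertible_if_pos_def_mat:
  fixes A :: "real^'n^'n"
  assumes "pos_def_mat A" shows "invertible A"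
proof -
  have "\<forall>x. A *v x = 0 \<longrightarrow> x = 0"
    using assms unfolding pos_def_mat_def by (metis inner_zero_right less_irrefl)
  then show ?thesis by (simp add: matrix_left_invertible_ker invertible_left_inverse)
qed

lemma matrix_inv_right: "invertible A \<Longrightarrow> A ** matrix_inv A = mat 1"
  unfolding invertible_def matrix_inv_def by (metis (mono_tags, lifting) someI_ex)

lemma pos_def_mat_matrix_inv:
  fixes A :: "real^'n^'n"
  assumes "pos_def_mat A"
  shows "pos_def_mat (matrix_inv A)"
proof -
  define Ai where "Ai = matrix_inv A"
  have right_inv: "A ** Ai = mat 1"
    using matrix_inv_right[OF invertible_if_pos_def_mat[OF assms]] by (simp add: Ai_def)
  have "transpose A = A" using assms by (simp add: pos_def_mat_def sym_mat_def)
  then have "transpose Ai ** A = mat 1"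
    using arg_cong[OF right_inv, of transpose] by (simp add: matrix_transpose_mul)
  then have "transpose Ai = Ai"
    by (metis right_inv matrix_mul_assoc matrix_mul_lid matrix_mul_rid)
  moreover have "0 < x \<bullet> (Ai *v x)" if "x \<noteq> 0" for x
  proof -
    have "A *v (Ai *v x) = x" by (simp add: matrix_vector_mul_assoc right_inv)
    then have "Ai *v x \<noteq> 0" using that by auto
    then have "0 < (Ai *v x) \<bullet> (A *v (Ai *v x))" using assms by (simp add: pos_def_mat_def)
    also have "\<dots> = x \<bullet> (Ai *v x)" by (simp add: \<open>A *v (Ai *v x) = x\<close> inner_commute)
    finally show ?thesis .
  qed
  ultimately show ?thesis by (simp add: pos_def_mat_def sym_mat_def Ai_def)
qed

lemma psd_mat_matrix_inv: "pos_def_mat K \<Longrightarrow> psd_mat (matrix_inv K)"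
  by (rule psd_mat_if_pos_def_mat[OF pos_def_mat_matrix_inv])

lemma wnorm_eq_norm_psd_sqrt:
  fixes L :: "real^'n^'n"
  assumes "psd_mat L"
  shows "wnorm L a = norm (psd_sqrt L *v a)"
proof -
  have "a \<bullet> (L *v a) = (psd_sqrt L *v a) \<bullet> (psd_sqrt L *v a)"
    using sym_mat_inner_commute[of "psd_sqrt L" a "psd_sqrt L *v a"] psd_sqrt[OF assms]
    by (simp add: psd_mat_def matrix_vector_mul_assoc)
  then show ?thesis by (simp add: wnorm_def norm_eq_sqrt_inner)
qed

lemma wnorm_nonneg: "psd_mat L \<Longrightarrow> 0 \<le> wnorm L a"
  by (simp add: wnorm_eq_norm_psd_sqrt)

lemma wnorm_sq:
  assumes "psd_mat L" shows "(wnorm L a)\<^sup>2 = a \<bullet> (L *v a)"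
  using assms by (simp add: wnorm_def psd_mat_def)

lemma wnorm_triangle_diff:
  assumes "psd_mat L"
  shows "\<bar>wnorm L a - wnorm L b\<bar> \<le> wnorm L (a - b)"
  using norm_triangle_ineq3[of "psd_sqrt L *v a" "psd_sqrt L *v b"]
  by (simp add: wnorm_eq_norm_psd_sqrt[OF assms] matrix_vector_mult_diff_distrib)

text \<open>With Q = K^(1/2) and w = Q K\<inverse> v we have Q w = v and |w| = |v| in the K\<inverse>-norm,
  so A^(1/2) v = (A^(1/2) Q) w.\<close>
lemma norm_psd_sqrt_le_op_norm:
  fixes K :: "real^'n^'n"
  assumes "pos_def_mat K" "psd_mat A"
  shows "norm (psd_sqrt A *v v) \<le> op_norm (psd_sqrt A ** psd_sqrt K) * wnorm (matrix_inv K) v"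
proof -
  define Q where "Q = psd_sqrt K"
  have Q: "psd_mat Q" "Q ** Q = K" using psd_sqrt[OF psd_mat_if_pos_def_mat[OF assms(1)]]
    by (auto simp: Q_def)
  define w where "w = Q *v (matrix_inv K *v v)"
  have Qw: "Q *v w = v"
    using matrix_inv_right[OF invertible_if_pos_def_mat[OF assms(1)]]
    by (simp add: w_def matrix_vector_mul_assoc matrix_mul_assoc Q(2))
  have "w \<bullet> w = (matrix_inv K *v v) \<bullet> (Q *v w)"
    using sym_mat_inner_commute[of Q "matrix_inv K *v v" w] Q(1)
    by (simp add: psd_mat_def w_def inner_commute)
  then have "norm w = wnorm (matrix_inv K) v"
    by (simp add: Qw inner_commute wnorm_def norm_eq_sqrt_inner)
  moreover have "psd_sqrt A *v v = (psd_sqrt A ** Q) *v w"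
    by (simp add: Qw[symmetric] matrix_vector_mul_assoc)
  then have "norm (psd_sqrt A *v v) \<le> onorm ((*v) (psd_sqrt A ** Q)) * norm w"
    by (simp add: onorm)
  ultimately show ?thesis by (simp add: op_norm_def Q_def)
qed

lemma borel_measurable_wnorm[measurable]: "wnorm L \<in> borel_measurable borel"
  unfolding wnorm_def[abs_def]
  by (intro borel_measurable_continuous_onI continuous_intros linear_continuous_on) simp

lemma borel_measurable_wsq_diff[measurable]: "wsq_diff A B \<in> borel_measurable borel"
  unfolding wsq_diff_def[abs_def]
  by (intro borel_measurable_continuous_onI continuous_intros linear_continuous_on) simp_all

section \<open>Covariance of a Gaussian measure\<close>

lemma integrable_normal_density_square:
  assumes "0 < s"
  shows "integrable lborel (\<lambda>x. normal_density m s x * x\<^sup>2)"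
proof -
  have "integrable lborel (\<lambda>x. normal_density m s x * (x - m)^2
      + 2 * m * (normal_density m s x * x) - m\<^sup>2 * normal_density m s x)"
    using assms by (intro Bochner_Integration.integrable_add Bochner_Integration.integrable_diff
        integrable_mult_right integrable_normal_moment integrable_normal_moment_nz_1
        integrable_normal_density)
  then show ?thesis by (simp add: power2_eq_square algebra_simps)
qed

lemma measurable_bounded_linear:
  assumes "bounded_linear l" "sets G = sets borel"
  shows "l \<in> borel_measurable G"
  using borel_measurable_continuous_onI[OF linear_continuous_on[OF assms(1)]]
  by (simp add: measurable_cong_sets[OF assms(2) refl])

lemma gaussian_measure_square_integrable:
  fixes l :: "'u::banach \<Rightarrow> real"
  assumes "gaussian_measure G" "bounded_linear l"
  shows "integrable G (\<lambda>u. (l u)\<^sup>2)"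
proof -
  interpret prob_space G using assms(1) by (simp add: gaussian_measure_def)
  have [measurable]: "l \<in> borel_measurable G"
    using assms by (intro measurable_bounded_linear) (auto simp: gaussian_measure_def)
  consider m s where "0 < s" "distributed G lborel l (\<lambda>x. ennreal (normal_density m s x))"
    | c where "AE u in G. l u = c"
    using assms by (auto simp: gaussian_measure_def)
  then show ?thesis
  proof cases
    case 1
    then show ?thesis
      using distributed_integrable[OF 1(2), of "\<lambda>x. x\<^sup>2"] integrable_normal_density_square by simp
  next
    case 2
    then have "integrable G (\<lambda>u. (l u)\<^sup>2) = integrable G (\<lambda>u. c\<^sup>2)"
      by (intro integrable_cong_AE) auto
    then show ?thesis by simp
  qed
qed

lemma (in finite_measure) integrable_mult_if_square_integrable:
  fixes f g :: "'a \<Rightarrow> real"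
  assumes [measurable]: "f \<in> borel_measurable M" "g \<in> borel_measurable M"
    and "integrable M (\<lambda>x. (f x)\<^sup>2)" "integrable M (\<lambda>x. (g x)\<^sup>2)"
  shows "integrable M (\<lambda>x. f x * g x)"
proof (rule Bochner_Integration.integrable_bound)
  show "integrable M (\<lambda>x. (f x)\<^sup>2 + (g x)\<^sup>2)"
    using assms by (intro Bochner_Integration.integrable_add)
  have "\<bar>f x\<bar> * \<bar>g x\<bar> \<le> (f x)\<^sup>2 + (g x)\<^sup>2" for x
  proof -
    have "2 * (\<bar>f x\<bar> * \<bar>g x\<bar>) \<le> (f x)\<^sup>2 + (g x)\<^sup>2"
      using sum_squares_bound[of "\<bar>f x\<bar>" "\<bar>g x\<bar>"] by (simp add: mult.assoc)
    moreover have "0 \<le> \<bar>f x\<bar> * \<bar>g x\<bar>" by simp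
    ultimately show ?thesis by linarith
  qed
  then show "AE x in M. norm (f x * g x) \<le> norm ((f x)\<^sup>2 + (g x)\<^sup>2)"
    by (intro AE_I2) (simp add: abs_mult)
qed simp

lemma (in finite_measure) integrable_centered_product:
  fixes f g :: "'a \<Rightarrow> real"
  assumes [measurable]: "f \<in> borel_measurable M" "g \<in> borel_measurable M"
    and "integrable M (\<lambda>x. (f x)\<^sup>2)" "integrable M (\<lambda>x. (g x)\<^sup>2)"
  shows "integrable M (\<lambda>x. (f x - a) * (g x - b))"
proof -
  have "integrable M (\<lambda>x. f x * g x - b * f x - a * g x + a * b)"
    using assms square_integrable_imp_integrable
    by (intro Bochner_Integration.integrable_add Bochner_Integration.integrable_diff
        integrable_mult_if_square_integrable integrable_mult_right integrable_const) auto
  then show ?thesis by (simp add: algebra_simps)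
qed

lemma quadratic_form_eq_sum:
  "x \<bullet> ((M::real^'n^'n) *v x) = (\<Sum>i\<in>UNIV. \<Sum>j\<in>UNIV. x$i * (x$j * M$i$j))"
  unfolding inner_vec_def matrix_vector_mult_def by (simp add: sum_distrib_left algebra_simps)

lemma psd_mat_Gamma_mat:
  fixes Obs :: "'u::banach \<Rightarrow> real^'n"
  assumes G: "gaussian_measure G" and "bounded_linear Obs"
  shows "psd_mat (Gamma_mat Obs G)"
proof -
  interpret prob_space G using G by (simp add: gaussian_measure_def)
  define f where "f i u = Obs u $ i - (\<integral>v. Obs v $ i \<partial>G)" for i u
  have bounded: "bounded_linear (\<lambda>u. Obs u $ i)" for i
    by (rule bounded_linear_compose[OF bounded_linear_vec_nth assms(2)])
  have [measurable]: "(\<lambda>u. Obs u $ i) \<in> borel_measurable G" for i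
    using G bounded by (intro measurable_bounded_linear) (auto simp: gaussian_measure_def)
  have square: "integrable G (\<lambda>u. (Obs u $ i)\<^sup>2)" for i
    by (rule gaussian_measure_square_integrable[OF G bounded])
  have product: "integrable G (\<lambda>u. f i u * f j u)" for i j
    unfolding f_def by (intro integrable_centered_product square) simp_all
  have entry: "Gamma_mat Obs G $ i $ j = (\<integral>u. f i u * f j u \<partial>G)" for i j
    by (simp add: Gamma_mat_def cov_form_def f_def)
  have "x \<bullet> (Gamma_mat Obs G *v x) = (\<integral>u. (\<Sum>i\<in>UNIV. x $ i * f i u)\<^sup>2 \<partial>G)" for x
  proof -
    have "x \<bullet> (Gamma_mat Obs G *v x)
        = (\<Sum>i\<in>UNIV. \<Sum>j\<in>UNIV. x $ i * (x $ j * (\<integral>u. f i u * f j u \<partial>G)))"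
      by (simp only: quadratic_form_eq_sum entry)
    also have "\<dots> = (\<integral>u. (\<Sum>i\<in>UNIV. \<Sum>j\<in>UNIV. x $ i * (x $ j * (f i u * f j u))) \<partial>G)"
      using product by (simp add: Bochner_Integration.integral_sum Bochner_Integration.integrable_sum)
    also have "\<dots> = (\<integral>u. (\<Sum>i\<in>UNIV. x $ i * f i u)\<^sup>2 \<partial>G)"
      by (rule Bochner_Integration.integral_cong[OF refl])
        (simp add: power2_eq_square sum_product algebra_simps)
    finally show ?thesis .
  qed
  then show ?thesis
    by (simp add: psd_mat_def sym_mat_def transpose_def vec_eq_iff entry mult.commute)
qed

section \<open>Kullback-Leibler divergence of reweighted measures\<close>

lemma abs_exp_neg_diff_le:
  fixes u v :: real
  assumes "0 \<le> u" "0 \<le> v"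
  shows "\<bar>exp (- u) - exp (- v)\<bar> \<le> \<bar>u - v\<bar>"
proof -
  have *: "exp (- a) - exp (- b) \<le> b - a" if "0 \<le> a" "a \<le> b" for a b :: real
  proof -
    have "exp (- a) - exp (- b) = exp (- a) * (1 - exp (a - b))"
      by (simp add: algebra_simps flip: exp_add)
    also have "\<dots> \<le> 1 - exp (a - b)"
      using mult_right_mono[of "exp (- a)" 1 "1 - exp (a - b)"] that by simp
    also have "\<dots> \<le> b - a" using exp_ge_add_one_self[of "a - b"] by linarith
    finally show ?thesis .
  qed
  show ?thesis
  proof (cases "u \<le> v")
    case True
    then show ?thesis using *[of u v] assms by (simp add: abs_if)
  next
    case False
    then show ?thesis using *[of v u] assms by (simp add: abs_if)
  qed
qed

lemma abs_ln_diff_le: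
  fixes z1 z2 :: real
  assumes "0 < z1" "0 < z2"
  shows "\<bar>ln z2 - ln z1\<bar> \<le> \<bar>z2 - z1\<bar> / min z1 z2"
proof -
  have *: "ln b - ln a \<le> (b - a) / a" if "0 < a" "a \<le> b" for a b :: real
    using ln_le_minus_one[of "b / a"] that by (simp add: ln_div field_simps)
  show ?thesis
  proof (cases "z1 \<le> z2")
    case True
    then show ?thesis using *[of z1 z2] assms by (simp add: min_def abs_if)
  next
    case False
    then show ?thesis using *[of z2 z1] assms by (simp add: min_def abs_if)
  qed
qed

lemma d_KL_le:
  assumes "sets \<nu>1 = sets \<nu>2" "absolutely_continuous \<nu>2 \<nu>1" "0 \<le> r"
    and "(\<integral>\<^sup>+ x. ennreal (max 0 (ln (enn2real (RN_deriv \<nu>2 \<nu>1 x)))) \<partial>\<nu>1) \<le> ennreal r"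
  shows "d_KL \<nu>1 \<nu>2 \<le> ereal r"
proof -
  let ?P = "\<integral>\<^sup>+ x. ennreal (max 0 (ln (enn2real (RN_deriv \<nu>2 \<nu>1 x)))) \<partial>\<nu>1"
  let ?N = "\<integral>\<^sup>+ x. ennreal (max 0 (- ln (enn2real (RN_deriv \<nu>2 \<nu>1 x)))) \<partial>\<nu>1"
  have "enn2ereal ?P \<le> ereal r" using assms(3,4)
    by (metis enn2ereal_ennreal less_eq_ennreal.rep_eq)
  then have "enn2ereal ?P - enn2ereal ?N \<le> ereal r"
    using ereal_diff_le_self[of "enn2ereal ?N" "enn2ereal ?P"] by simp
  then show ?thesis using assms(1,2) by (simp add: d_KL_def Let_def)
qed

lemma null_sets_density_pos:
  assumes "f \<in> borel_measurable M" "\<And>x. 0 < f x"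
  shows "null_sets (density M f) = null_sets M"
proof (intro set_eqI iffI)
  fix A assume "A \<in> null_sets (density M f)"
  then have "A \<in> sets M" "AE x in M. x \<in> A \<longrightarrow> f x = 0"
    using null_sets_density_iff[OF assms(1)] by auto
  moreover from this(2) have "AE x in M. x \<notin> A"
    using assms(2) by (auto elim!: eventually_mono simp: less_le)
  ultimately show "A \<in> null_sets M" using AE_iff_null_sets by blast
next
  fix A assume "A \<in> null_sets M"
  then have "AE x in M. x \<in> A \<longrightarrow> f x = 0"
    using AE_iff_null_sets[of A M] by (auto elim!: eventually_mono)
  then show "A \<in> null_sets (density M f)"
    using null_sets_density_iff[OF assms(1)] \<open>A \<in> null_sets M\<close> by auto
qed

lemma space_reweight[simp]: "space (reweight M \<Phi>) = space M"
  and sets_reweight[simp]: "sets (reweight M \<Phi>) = sets M"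
  by (simp_all add: reweight_def)

context prob_space
begin

lemma integrable_exp_neg:
  fixes \<Phi> :: "'a \<Rightarrow> real"
  assumes "\<Phi> \<in> borel_measurable M" "\<And>x. 0 \<le> \<Phi> x"
  shows "integrable M (\<lambda>x. exp (- \<Phi> x))"
  by (rule Bochner_Integration.integrable_bound[of _ "\<lambda>x. 1::real"]) (use assms in auto)

text \<open>Jensen's inequality, via the tangent line of exp at the mean.\<close>
lemma exp_neg_integral_le:
  fixes \<Phi> :: "'a \<Rightarrow> real"
  assumes "\<Phi> \<in> borel_measurable M" "\<And>x. 0 \<le> \<Phi> x" "integrable M \<Phi>"
  shows "exp (- (\<integral>x. \<Phi> x \<partial>M)) \<le> (\<integral>x. exp (- \<Phi> x) \<partial>M)"
proof -
  define a where "a = (\<integral>x. \<Phi> x \<partial>M)"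
  have "exp (- a) * (1 + (a - \<Phi> x)) \<le> exp (- \<Phi> x)" for x
    using mult_left_mono[OF exp_ge_add_one_self[of "a - \<Phi> x"], of "exp (- a)"]
    by (simp flip: exp_add)
  then have "(\<integral>x. exp (- a) * (1 + (a - \<Phi> x)) \<partial>M) \<le> (\<integral>x. exp (- \<Phi> x) \<partial>M)"
    by (intro integral_mono integrable_exp_neg assms integrable_mult_right
        Bochner_Integration.integrable_add Bochner_Integration.integrable_diff) auto
  moreover have "(\<integral>x. exp (- a) * (1 + (a - \<Phi> x)) \<partial>M) = exp (- a)"
    using assms(3) by (simp add: Bochner_Integration.integral_add Bochner_Integration.integral_diff
        a_def prob_space)
  ultimately show ?thesis by (simp add: a_def)
qed

lemma abs_integral_exp_neg_diff_le:
  fixes \<Phi>1 \<Phi>2 :: "'a \<Rightarrow> real"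
  assumes "\<Phi>1 \<in> borel_measurable M" "\<And>x. 0 \<le> \<Phi>1 x" "integrable M \<Phi>1"
    and "\<Phi>2 \<in> borel_measurable M" "\<And>x. 0 \<le> \<Phi>2 x" "integrable M \<Phi>2"
  shows "\<bar>(\<integral>x. exp (- \<Phi>2 x) \<partial>M) - (\<integral>x. exp (- \<Phi>1 x) \<partial>M)\<bar> \<le> (\<integral>x. \<bar>\<Phi>1 x - \<Phi>2 x\<bar> \<partial>M)"
proof -
  note integrable = integrable_exp_neg[OF assms(1,2)] integrable_exp_neg[OF assms(4,5)]
  have "\<bar>(\<integral>x. exp (- \<Phi>2 x) \<partial>M) - (\<integral>x. exp (- \<Phi>1 x) \<partial>M)\<bar>
      \<le> (\<integral>x. \<bar>exp (- \<Phi>2 x) - exp (- \<Phi>1 x)\<bar> \<partial>M)"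
    using integral_abs_bound integrable by (simp flip: Bochner_Integration.integral_diff)
  also have "\<dots> \<le> (\<integral>x. \<bar>\<Phi>1 x - \<Phi>2 x\<bar> \<partial>M)"
    using integrable assms abs_exp_neg_diff_le[OF assms(5,2)]
    by (intro integral_mono integrable_abs Bochner_Integration.integrable_diff)
       (auto simp: abs_minus_commute)
  finally show ?thesis .
qed

lemma integral_exp_neg_pos:
  fixes \<Phi> :: "'a \<Rightarrow> real"
  assumes "\<Phi> \<in> borel_measurable M" "\<And>x. 0 \<le> \<Phi> x" "integrable M \<Phi>"
  shows "0 < (\<integral>x. exp (- \<Phi> x) \<partial>M)"
  using exp_neg_integral_le[OF assms] by (rule less_le_trans[OF exp_gt_zero])

lemma null_sets_reweight:
  fixes \<Phi> :: "'a \<Rightarrow> real"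
  assumes "\<Phi> \<in> borel_measurable M" "\<And>x. 0 \<le> \<Phi> x" "integrable M \<Phi>"
  shows "null_sets (reweight M \<Phi>) = null_sets M"
  unfolding reweight_def using integral_exp_neg_pos[OF assms] assms(1)
  by (intro null_sets_density_pos) auto

lemma prob_space_reweight:
  fixes \<Phi> :: "'a \<Rightarrow> real"
  assumes "\<Phi> \<in> borel_measurable M" "\<And>x. 0 \<le> \<Phi> x" "integrable M \<Phi>"
  shows "prob_space (reweight M \<Phi>)"
proof (rule prob_spaceI)
  define f where "f x = exp (- \<Phi> x) / (\<integral>x. exp (- \<Phi> x) \<partial>M)" for x
  have "0 < (\<integral>x. exp (- \<Phi> x) \<partial>M)" by (rule integral_exp_neg_pos[OF assms])
  have [measurable]: "f \<in> borel_measurable M" unfolding f_def using assms(1) by measurable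
  have "reweight M \<Phi> = density M (\<lambda>x. ennreal (f x))" by (simp add: reweight_def f_def)
  then have "emeasure (reweight M \<Phi>) (space (reweight M \<Phi>)) = (\<integral>\<^sup>+ x. ennreal (f x) \<partial>M)"
    by (simp add: emeasure_density nn_integral_set_ennreal[symmetric])
  also have "\<dots> = ennreal (\<integral>x. f x \<partial>M)"
    using integrable_exp_neg[OF assms(1,2)] \<open>0 < (\<integral>x. exp (- \<Phi> x) \<partial>M)\<close>
    by (intro nn_integral_eq_integral) (auto simp: f_def)
  also have "(\<integral>x. f x \<partial>M) = 1"
    using \<open>0 < (\<integral>x. exp (- \<Phi> x) \<partial>M)\<close> by (simp add: f_def)
  finally show "emeasure (reweight M \<Phi>) (space (reweight M \<Phi>)) = 1" by simp
qed

lemma nn_integral_reweight_le: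
  fixes \<Phi> h :: "'a \<Rightarrow> real"
  assumes "\<Phi> \<in> borel_measurable M" "\<And>x. 0 \<le> \<Phi> x" "integrable M \<Phi>"
    and "integrable M h" "\<And>x. 0 \<le> h x"
  shows "(\<integral>\<^sup>+ x. ennreal (h x) \<partial>reweight M \<Phi>) \<le> ennreal ((\<integral>x. h x \<partial>M) / (\<integral>x. exp (- \<Phi> x) \<partial>M))"
proof -
  define Z where "Z = (\<integral>x. exp (- \<Phi> x) \<partial>M)"
  define f where "f x = exp (- \<Phi> x) / Z" for x
  have "0 < Z" unfolding Z_def by (rule integral_exp_neg_pos[OF assms(1-3)])
  have [measurable]: "f \<in> borel_measurable M" "h \<in> borel_measurable M"
    unfolding f_def using assms(1,4) by auto
  have "(\<integral>\<^sup>+ x. ennreal (h x) \<partial>reweight M \<Phi>) = (\<integral>\<^sup>+ x. ennreal (f x) * ennreal (h x) \<partial>M)"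
    unfolding reweight_def Z_def[symmetric] f_def[symmetric] by (rule nn_integral_density) auto
  also have "\<dots> = (\<integral>\<^sup>+ x. ennreal (f x * h x) \<partial>M)"
    using \<open>0 < Z\<close> assms(5) by (intro nn_integral_cong ennreal_mult[symmetric]) (auto simp: f_def)
  also have "\<dots> \<le> (\<integral>\<^sup>+ x. ennreal (h x / Z) \<partial>M)"
  proof (intro nn_integral_mono ennreal_leI)
    fix x
    have "f x \<le> 1 / Z" using \<open>0 < Z\<close> assms(2)[of x] by (simp add: f_def divide_right_mono)
    then show "f x * h x \<le> h x / Z" using assms(5)[of x] mult_right_mono by fastforce
  qed
  also have "\<dots> = ennreal ((\<integral>x. h x \<partial>M) / Z)"
    using assms(4,5) \<open>0 < Z\<close> by (subst nn_integral_eq_integral) auto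
  finally show ?thesis by (simp add: Z_def)
qed

end

locale potential_pair = prob_space +
  fixes \<Phi>1 \<Phi>2 :: "'a \<Rightarrow> real"
  assumes measurable_potentials[measurable]: "\<Phi>1 \<in> borel_measurable M" "\<Phi>2 \<in> borel_measurable M"
    and potentials_nonneg: "\<And>x. 0 \<le> \<Phi>1 x" "\<And>x. 0 \<le> \<Phi>2 x"
    and integrable_potentials: "integrable M \<Phi>1" "integrable M \<Phi>2"
begin

abbreviation "Z1 \<equiv> \<integral>x. exp (- \<Phi>1 x) \<partial>M"
abbreviation "Z2 \<equiv> \<integral>x. exp (- \<Phi>2 x) \<partial>M"

lemmas potential1 = measurable_potentials(1) potentials_nonneg(1) integrable_potentials(1)
lemmas potential2 = measurable_potentials(2) potentials_nonneg(2) integrable_potentials(2)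

lemma normalizers_pos: "0 < Z1" "0 < Z2"
  using integral_exp_neg_pos[OF potential1] integral_exp_neg_pos[OF potential2] by auto

lemma density_reweight_eq_reweight:
  "density (reweight M \<Phi>2) (\<lambda>x. ennreal (exp (\<Phi>2 x - \<Phi>1 x) * Z2 / Z1)) = reweight M \<Phi>1"
proof -
  have "ennreal (exp (- \<Phi>2 x) / Z2) * ennreal (exp (\<Phi>2 x - \<Phi>1 x) * Z2 / Z1)
      = ennreal (exp (- \<Phi>1 x) / Z1)" for x
    using normalizers_pos
    by (simp add: ennreal_mult[symmetric] field_simps flip: exp_add)
  then show ?thesis
    unfolding reweight_def by (subst density_density_eq) auto
qed

lemma ln_RN_deriv_reweight:
  "AE x in reweight M \<Phi>1. ln (enn2real (RN_deriv (reweight M \<Phi>2) (reweight M \<Phi>1) x))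
      = \<Phi>2 x - \<Phi>1 x + (ln Z2 - ln Z1)"
proof -
  define g where "g x = exp (\<Phi>2 x - \<Phi>1 x) * Z2 / Z1" for x
  have g_pos: "0 < g x" for x using normalizers_pos by (simp add: g_def)
  have [measurable]: "g \<in> borel_measurable M" unfolding g_def by measurable
  then have [measurable]: "g \<in> borel_measurable (reweight M \<Phi>2)" by (simp add: reweight_def)
  have "AE x in reweight M \<Phi>2. ennreal (g x) = RN_deriv (reweight M \<Phi>2) (reweight M \<Phi>1) x"
    using density_reweight_eq_reweight[folded g_def]
    by (intro sigma_finite_measure.RN_deriv_unique prob_space_imp_sigma_finite
        prob_space_reweight potential2) auto
  then have "AE x in reweight M \<Phi>1. ennreal (g x) = RN_deriv (reweight M \<Phi>2) (reweight M \<Phi>1) x"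
    using null_sets_reweight[OF potential1] null_sets_reweight[OF potential2]
    by (simp add: eventually_ae_filter)
  then show ?thesis
  proof (rule eventually_mono)
    fix x assume "ennreal (g x) = RN_deriv (reweight M \<Phi>2) (reweight M \<Phi>1) x"
    then have "enn2real (RN_deriv (reweight M \<Phi>2) (reweight M \<Phi>1) x) = g x"
      using g_pos[of x] by (simp flip: \<open>ennreal (g x) = _\<close>)
    then show "ln (enn2real (RN_deriv (reweight M \<Phi>2) (reweight M \<Phi>1) x))
        = \<Phi>2 x - \<Phi>1 x + (ln Z2 - ln Z1)"
      using normalizers_pos by (simp add: g_def ln_mult ln_div)
  qed
qed

end

context potential_pair
begin

lemma d_KL_reweight_le_normalized:
  "d_KL (reweight M \<Phi>1) (reweight M \<Phi>2)
     \<le> ereal (((\<integral>x. \<bar>\<Phi>1 x - \<Phi>2 x\<bar> \<partial>M) + \<bar>ln Z2 - ln Z1\<bar>) / Z1)"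
proof (rule d_KL_le)
  define L where "L = \<bar>ln Z2 - ln Z1\<bar>"
  have "0 \<le> L" by (simp add: L_def)
  have integrable_diff: "integrable M (\<lambda>x. \<bar>\<Phi>1 x - \<Phi>2 x\<bar> + L)"
    using integrable_potentials by auto
  have "(\<integral>\<^sup>+ x. ennreal (max 0 (ln (enn2real (RN_deriv (reweight M \<Phi>2) (reweight M \<Phi>1) x))))
        \<partial>reweight M \<Phi>1)
      \<le> (\<integral>\<^sup>+ x. ennreal (\<bar>\<Phi>1 x - \<Phi>2 x\<bar> + L) \<partial>reweight M \<Phi>1)"
    using ln_RN_deriv_reweight
  proof (intro nn_integral_mono_AE, elim eventually_mono)
    fix x assume "ln (enn2real (RN_deriv (reweight M \<Phi>2) (reweight M \<Phi>1) x))
        = \<Phi>2 x - \<Phi>1 x + (ln Z2 - ln Z1)"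
    then show "ennreal (max 0 (ln (enn2real (RN_deriv (reweight M \<Phi>2) (reweight M \<Phi>1) x))))
        \<le> ennreal (\<bar>\<Phi>1 x - \<Phi>2 x\<bar> + L)"
      using \<open>0 \<le> L\<close> by (intro ennreal_leI) (auto simp: L_def)
  qed
  also have "\<dots> \<le> ennreal ((\<integral>x. \<bar>\<Phi>1 x - \<Phi>2 x\<bar> + L \<partial>M) / Z1)"
    using \<open>0 \<le> L\<close> by (intro nn_integral_reweight_le potential1 integrable_diff) auto
  also have "(\<integral>x. \<bar>\<Phi>1 x - \<Phi>2 x\<bar> + L \<partial>M) = (\<integral>x. \<bar>\<Phi>1 x - \<Phi>2 x\<bar> \<partial>M) + L"
    using integrable_potentials by (simp add: prob_space)
  finally show "(\<integral>\<^sup>+ x. ennreal (max 0 (ln (enn2real (RN_deriv (reweight M \<Phi>2) (reweight M \<Phi>1) x))))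
        \<partial>reweight M \<Phi>1)
      \<le> ennreal (((\<integral>x. \<bar>\<Phi>1 x - \<Phi>2 x\<bar> \<partial>M) + \<bar>ln Z2 - ln Z1\<bar>) / Z1)"
    by (simp add: L_def)
  show "0 \<le> ((\<integral>x. \<bar>\<Phi>1 x - \<Phi>2 x\<bar> \<partial>M) + \<bar>ln Z2 - ln Z1\<bar>) / Z1"
    using normalizers_pos by simp
  show "absolutely_continuous (reweight M \<Phi>2) (reweight M \<Phi>1)"
    using null_sets_reweight[OF potential1] null_sets_reweight[OF potential2]
    by (simp add: absolutely_continuous_def)
qed simp

text \<open>Each normalizer lies in [exp(-\<parallel>\<Phi>i\<parallel>), 1], so 1/Z1 and the Lipschitz constant of ln on
  [min Z1 Z2, \<infinity>) are at most E = exp(\<parallel>\<Phi>1\<parallel> + \<parallel>\<Phi>2\<parallel>).\<close>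
lemma d_KL_reweight_le:
  "d_KL (reweight M \<Phi>1) (reweight M \<Phi>2)
     \<le> ereal (2 * exp (2 * ((\<integral>x. \<Phi>1 x \<partial>M) + (\<integral>x. \<Phi>2 x \<partial>M))) * (\<integral>x. \<bar>\<Phi>1 x - \<Phi>2 x\<bar> \<partial>M))"
proof -
  define E where "E = exp ((\<integral>x. \<Phi>1 x \<partial>M) + (\<integral>x. \<Phi>2 x \<partial>M))"
  define D where "D = (\<integral>x. \<bar>\<Phi>1 x - \<Phi>2 x\<bar> \<partial>M)"
  have "0 \<le> (\<integral>x. \<Phi>1 x \<partial>M)" "0 \<le> (\<integral>x. \<Phi>2 x \<partial>M)" "0 \<le> D"
    using potentials_nonneg by (simp_all add: D_def)
  then have "1 \<le> E" by (simp add: E_def)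
  have "exp (- (\<integral>x. \<Phi>1 x \<partial>M)) \<le> Z1" "exp (- (\<integral>x. \<Phi>2 x \<partial>M)) \<le> Z2"
    using exp_neg_integral_le[OF potential1] exp_neg_integral_le[OF potential2] by auto
  then have "inverse E \<le> Z1" "inverse E \<le> Z2"
    using \<open>0 \<le> (\<integral>x. \<Phi>1 x \<partial>M)\<close> \<open>0 \<le> (\<integral>x. \<Phi>2 x \<partial>M)\<close>
    by (auto simp: E_def exp_minus[symmetric] intro: order_trans[rotated])
  then have inv_Z: "1 / Z1 \<le> E" "1 / min Z1 Z2 \<le> E"
    using normalizers_pos \<open>1 \<le> E\<close> by (auto simp: field_simps min_def)
  have "\<bar>ln Z2 - ln Z1\<bar> \<le> \<bar>Z2 - Z1\<bar> * (1 / min Z1 Z2)"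
    using abs_ln_diff_le[OF normalizers_pos] by simp
  also have "\<dots> \<le> D * E"
    using abs_integral_exp_neg_diff_le[OF potential1 potential2] inv_Z(2) \<open>0 \<le> D\<close>
    by (intro mult_mono) (auto simp: D_def)
  finally have "(D + \<bar>ln Z2 - ln Z1\<bar>) * (1 / Z1) \<le> (D + D * E) * E"
    using inv_Z(1) \<open>0 \<le> D\<close> normalizers_pos by (intro mult_mono) auto
  also have "\<dots> \<le> 2 * E\<^sup>2 * D"
    using \<open>1 \<le> E\<close> \<open>0 \<le> D\<close> mult_left_mono[of 1 E "D * E"]
    by (simp add: power2_eq_square algebra_simps)
  finally have "(D + \<bar>ln Z2 - ln Z1\<bar>) / Z1 \<le> 2 * E\<^sup>2 * D" by simp
  moreover have "E\<^sup>2 = exp (2 * ((\<integral>x. \<Phi>1 x \<partial>M) + (\<integral>x. \<Phi>2 x \<partial>M)))"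
    by (simp add: E_def power2_eq_square flip: exp_add)
  ultimately show ?thesis
    using d_KL_reweight_le_normalized order_trans by (fastforce simp: D_def)
qed

end

section \<open>Estimating the misfit difference\<close>

lemma (in prob_space) integral_le_sqrt_integral_square:
  fixes p :: "'a \<Rightarrow> real"
  assumes "p \<in> borel_measurable M" "integrable M (\<lambda>x. (p x)\<^sup>2)"
  shows "(\<integral>x. p x \<partial>M) \<le> sqrt (\<integral>x. (p x)\<^sup>2 \<partial>M)"
proof -
  have "integrable M p" using square_integrable_imp_integrable[OF assms] .
  then have "(\<integral>x. p x \<partial>M)\<^sup>2 \<le> (\<integral>x. (p x)\<^sup>2 \<partial>M)"
    using variance_eq[of p] variance_positive[of p] assms(2) by simp
  then show ?thesis by (rule real_le_rsqrt)
qed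

lemma abs_half_square_diff_le:
  fixes p q b m c :: real
  assumes "0 \<le> p" "0 \<le> q" "\<bar>p - q\<bar> \<le> m" "q \<le> c * b"
  shows "\<bar>p\<^sup>2/2 - b\<^sup>2/2\<bar> \<le> m * (p + c * b) / 2 + \<bar>q\<^sup>2 - b\<^sup>2\<bar> / 2"
proof -
  have "p\<^sup>2 - q\<^sup>2 = (p - q) * (p + q)" by (simp add: power2_eq_square algebra_simps)
  then have "\<bar>p\<^sup>2 - q\<^sup>2\<bar> = \<bar>p - q\<bar> * (p + q)" using assms(1,2) by (simp add: abs_mult)
  also have "\<dots> \<le> m * (p + c * b)" using assms by (intro mult_mono) auto
  finally have "\<bar>p\<^sup>2 - q\<^sup>2\<bar> \<le> m * (p + c * b)" .
  moreover have "\<bar>p\<^sup>2 - b\<^sup>2\<bar> \<le> \<bar>p\<^sup>2 - q\<^sup>2\<bar> + \<bar>q\<^sup>2 - b\<^sup>2\<bar>" by simp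
  ultimately have "\<bar>p\<^sup>2 - b\<^sup>2\<bar> \<le> m * (p + c * b) + \<bar>q\<^sup>2 - b\<^sup>2\<bar>" by linarith
  moreover have "\<bar>p\<^sup>2/2 - b\<^sup>2/2\<bar> = \<bar>p\<^sup>2 - b\<^sup>2\<bar> / 2" by (simp add: abs_if field_simps)
  ultimately show ?thesis by (simp add: add_divide_distrib[symmetric] divide_right_mono)
qed

context
  fixes A K :: "real^'n^'n"
  assumes A: "psd_mat A" and K: "pos_def_mat K"
begin

lemma wnorm_le_op_norm_mult_wnorm_inv:
  "wnorm A v \<le> op_norm (psd_sqrt A ** psd_sqrt K) * wnorm (matrix_inv K) v"
  using norm_psd_sqrt_le_op_norm[OF K A] by (simp add: wnorm_eq_norm_psd_sqrt[OF A])

lemma abs_wsq_diff_le: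
  "\<bar>wsq_diff A (matrix_inv K) v\<bar>
     \<le> ((op_norm (psd_sqrt A ** psd_sqrt K))\<^sup>2 + 1) * (wnorm (matrix_inv K) v)\<^sup>2"
proof -
  let ?c = "op_norm (psd_sqrt A ** psd_sqrt K)"
  have "(wnorm A v)\<^sup>2 \<le> (?c * wnorm (matrix_inv K) v)\<^sup>2"
    using wnorm_le_op_norm_mult_wnorm_inv wnorm_nonneg[OF A] by (intro power_mono) auto
  moreover have "0 \<le> v \<bullet> (A *v v)" "0 \<le> v \<bullet> (matrix_inv K *v v)"
    using A psd_mat_matrix_inv[OF K] by (simp_all add: psd_mat_def)
  ultimately show ?thesis
    using wnorm_sq[OF A, of v] wnorm_sq[OF psd_mat_matrix_inv[OF K], of v]
    by (simp add: wsq_diff_def power_mult_distrib abs_le_iff algebra_simps)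
qed

lemma abs_misfit_diff_le:
  "\<bar>(wnorm A r)\<^sup>2/2 - (wnorm (matrix_inv K) (r - m))\<^sup>2/2\<bar>
     \<le> wnorm A m * (wnorm A r + op_norm (psd_sqrt A ** psd_sqrt K) * wnorm (matrix_inv K) (r - m)) / 2
       + \<bar>wsq_diff A (matrix_inv K) (r - m)\<bar> / 2"
proof -
  have "\<bar>(wnorm A (r - m))\<^sup>2 - (wnorm (matrix_inv K) (r - m))\<^sup>2\<bar> = \<bar>wsq_diff A (matrix_inv K) (r - m)\<bar>"
    using wnorm_sq[OF A] wnorm_sq[OF psd_mat_matrix_inv[OF K]] by (simp add: wsq_diff_def)
  moreover have "\<bar>wnorm A r - wnorm A (r - m)\<bar> \<le> wnorm A m"
    using wnorm_triangle_diff[OF A, of r "r - m"] by simp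
  ultimately show ?thesis
    using abs_half_square_diff_le[OF wnorm_nonneg[OF A] wnorm_nonneg[OF A]
        \<open>\<bar>wnorm A r - wnorm A (r - m)\<bar> \<le> wnorm A m\<close> wnorm_le_op_norm_mult_wnorm_inv]
    by simp
qed

end

lemma (in prob_space) integral_abs_half_square_diff_le:
  fixes p b w :: "'a \<Rightarrow> real" and m c :: real
  assumes [measurable]: "p \<in> borel_measurable M" "b \<in> borel_measurable M" "w \<in> borel_measurable M"
    and "\<And>x. 0 \<le> p x" "\<And>x. 0 \<le> b x" "0 \<le> m" "0 \<le> c"
    and "integrable M (\<lambda>x. (p x)\<^sup>2)" "integrable M (\<lambda>x. (b x)\<^sup>2)" "integrable M w"
    and bound: "\<And>x. \<bar>(p x)\<^sup>2/2 - (b x)\<^sup>2/2\<bar> \<le> m * (p x + c * b x) / 2 + \<bar>w x\<bar> / 2"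
  shows "(\<integral>x. \<bar>(p x)\<^sup>2/2 - (b x)\<^sup>2/2\<bar> \<partial>M)
     \<le> (m * (sqrt (\<integral>x. (p x)\<^sup>2 \<partial>M) + c * sqrt (\<integral>x. (b x)\<^sup>2 \<partial>M)) + (\<integral>x. \<bar>w x\<bar> \<partial>M)) / 2"
proof -
  have integrable: "integrable M p" "integrable M b"
    using assms by (auto intro: square_integrable_imp_integrable)
  have "(\<integral>x. \<bar>(p x)\<^sup>2/2 - (b x)\<^sup>2/2\<bar> \<partial>M) \<le> (\<integral>x. m * (p x + c * b x) / 2 + \<bar>w x\<bar> / 2 \<partial>M)"
    using assms integrable bound
    by (intro integral_mono) (auto intro!: Bochner_Integration.integrable_add
        Bochner_Integration.integrable_diff)
  also have "\<dots> = (m * ((\<integral>x. p x \<partial>M) + c * (\<integral>x. b x \<partial>M)) + (\<integral>x. \<bar>w x\<bar> \<partial>M)) / 2"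
    using integrable assms(10) by (simp add: add_divide_distrib)
  also have "\<dots> \<le> (m * (sqrt (\<integral>x. (p x)\<^sup>2 \<partial>M) + c * sqrt (\<integral>x. (b x)\<^sup>2 \<partial>M)) + (\<integral>x. \<bar>w x\<bar> \<partial>M)) / 2"
    using integral_le_sqrt_integral_square[of p] integral_le_sqrt_integral_square[of b] assms
    by (intro divide_right_mono add_right_mono mult_left_mono add_mono) auto
  finally show ?thesis .
qed

lemma (in prob_space) integral_abs_misfit_diff_le:
  fixes A K :: "real^'n^'n" and r :: "'a \<Rightarrow> real^'n" and m :: "real^'n"
  assumes A: "psd_mat A" and K: "pos_def_mat K" and [measurable]: "r \<in> borel_measurable M"
    and "integrable M (\<lambda>t. (wnorm A (r t))\<^sup>2)"
    and "integrable M (\<lambda>t. (wnorm (matrix_inv K) (r t - m))\<^sup>2)"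
  defines "c \<equiv> op_norm (psd_sqrt A ** psd_sqrt K)"
  shows "(\<integral>t. \<bar>(wnorm A (r t))\<^sup>2/2 - (wnorm (matrix_inv K) (r t - m))\<^sup>2/2\<bar> \<partial>M)
    \<le> (wnorm A m * (sqrt (\<integral>t. (wnorm A (r t))\<^sup>2 \<partial>M)
          + c * sqrt (\<integral>t. (wnorm (matrix_inv K) (r t - m))\<^sup>2 \<partial>M))
        + (\<integral>t. \<bar>wsq_diff A (matrix_inv K) (r t - m)\<bar> \<partial>M)) / 2"
proof (rule integral_abs_half_square_diff_le)
  show "integrable M (\<lambda>t. wsq_diff A (matrix_inv K) (r t - m))"
  proof (rule Bochner_Integration.integrable_bound)
    show "integrable M (\<lambda>t. (c\<^sup>2 + 1) * (wnorm (matrix_inv K) (r t - m))\<^sup>2)"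
      using assms(5) by simp
    show "AE t in M. norm (wsq_diff A (matrix_inv K) (r t - m))
        \<le> norm ((c\<^sup>2 + 1) * (wnorm (matrix_inv K) (r t - m))\<^sup>2)"
      using abs_wsq_diff_le[OF A K] by (intro AE_I2) (simp add: c_def)
  qed simp
  show "0 \<le> c" unfolding c_def op_norm_def by (rule onorm_pos_le) simp
qed (use assms abs_misfit_diff_le[OF A K] wnorm_nonneg psd_mat_matrix_inv[OF K] in auto)

lemma (in prob_space) d_KL_misfit_reweights_le:
  fixes A K :: "real^'n^'n" and r :: "'a \<Rightarrow> real^'n" and m :: "real^'n"
  assumes A: "psd_mat A" and K: "pos_def_mat K" and r[measurable]: "r \<in> borel_measurable M"
    and \<Phi>1: "\<Phi>1 = (\<lambda>t. 1/2 * (wnorm A (r t))\<^sup>2)"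
    and \<Phi>2: "\<Phi>2 = (\<lambda>t. 1/2 * (wnorm (matrix_inv K) (r t - m))\<^sup>2)"
    and "integrable M \<Phi>1" "integrable M \<Phi>2"
  defines "c \<equiv> op_norm (psd_sqrt A ** psd_sqrt K)"
  shows "max (d_KL (reweight M \<Phi>1) (reweight M \<Phi>2)) (d_KL (reweight M \<Phi>2) (reweight M \<Phi>1))
    \<le> ereal (exp (2 * (\<integral>t. \<Phi>1 t \<partial>M) + 2 * (\<integral>t. \<Phi>2 t \<partial>M))
         * max (sqrt 2 * (sqrt (\<integral>t. \<Phi>1 t \<partial>M) + c * sqrt (\<integral>t. \<Phi>2 t \<partial>M))) 1
         * (wnorm A m + (\<integral>t. \<bar>wsq_diff A (matrix_inv K) (r t - m)\<bar> \<partial>M)))"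
proof -
  have "\<Phi>1 \<in> borel_measurable M" "\<Phi>2 \<in> borel_measurable M" unfolding \<Phi>1 \<Phi>2 by measurable
  then interpret potential_pair M \<Phi>1 \<Phi>2
    using assms(6,7) by unfold_locales (auto simp: \<Phi>1 \<Phi>2)
  interpret swapped: potential_pair M \<Phi>2 \<Phi>1
    by unfold_locales (simp_all add: potential1 potential2)
  define a1 a2 where "a1 = (\<integral>t. \<Phi>1 t \<partial>M)" and "a2 = (\<integral>t. \<Phi>2 t \<partial>M)"
  define D W where "D = (\<integral>t. \<bar>\<Phi>1 t - \<Phi>2 t\<bar> \<partial>M)"
    and "W = (\<integral>t. \<bar>wsq_diff A (matrix_inv K) (r t - m)\<bar> \<partial>M)"
  define Mx where "Mx = max (sqrt 2 * (sqrt a1 + c * sqrt a2)) 1"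
  have "0 \<le> W" "0 \<le> wnorm A m" by (simp_all add: W_def wnorm_nonneg[OF A])
  have "integrable M (\<lambda>t. (wnorm A (r t))\<^sup>2)" "integrable M (\<lambda>t. (wnorm (matrix_inv K) (r t - m))\<^sup>2)"
    using integrable_mult_right[OF assms(6), of 2] integrable_mult_right[OF assms(7), of 2]
    by (simp_all add: \<Phi>1 \<Phi>2)
  note misfit_bound = integral_abs_misfit_diff_le[OF A K r this]
  have "(\<integral>t. (wnorm A (r t))\<^sup>2 \<partial>M) = 2 * a1"
    and "(\<integral>t. (wnorm (matrix_inv K) (r t - m))\<^sup>2 \<partial>M) = 2 * a2"
    by (simp_all add: a1_def a2_def \<Phi>1 \<Phi>2)
  with misfit_bound have "D \<le> (wnorm A m * (sqrt 2 * (sqrt a1 + c * sqrt a2)) + W) / 2"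
    by (simp add: D_def W_def \<Phi>1 \<Phi>2 c_def real_sqrt_mult algebra_simps)
  also have "\<dots> \<le> Mx * (wnorm A m + W) / 2"
  proof -
    have "wnorm A m * (sqrt 2 * (sqrt a1 + c * sqrt a2)) \<le> wnorm A m * Mx"
      using \<open>0 \<le> wnorm A m\<close> by (intro mult_left_mono) (auto simp: Mx_def)
    moreover have "W \<le> W * Mx" using \<open>0 \<le> W\<close> mult_left_mono[of 1 Mx W] by (simp add: Mx_def)
    ultimately show ?thesis by (simp add: field_simps)
  qed
  finally have "2 * exp (2 * (a1 + a2)) * D \<le> exp (2 * a1 + 2 * a2) * Mx * (wnorm A m + W)"
    using mult_left_mono[of "2 * D" "Mx * (wnorm A m + W)" "exp (2 * (a1 + a2))"]
    by (simp add: algebra_simps)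
  moreover have "d_KL (reweight M \<Phi>1) (reweight M \<Phi>2) \<le> ereal (2 * exp (2 * (a1 + a2)) * D)"
    using d_KL_reweight_le by (simp add: a1_def a2_def D_def)
  moreover have "d_KL (reweight M \<Phi>2) (reweight M \<Phi>1) \<le> ereal (2 * exp (2 * (a1 + a2)) * D)"
    using swapped.d_KL_reweight_le by (simp add: a1_def a2_def D_def add.commute abs_minus_commute)
  ultimately show ?thesis
    by (simp add: a1_def a2_def Mx_def W_def order_trans)
qed

theorem mainTheorem6:
  fixes \<Theta> :: "'b::{banach, second_countable_topology} set"
    and \<mu> :: "'b measure"
    and Obs :: "'u::banach \<Rightarrow> real^'n"
    and M :: "'b \<Rightarrow> 'u"
    and \<Sigma> :: "real^'n^'n"
    and y :: "real^'n"
    and mE :: 'u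
    and G :: "'u measure"
    and \<Phi>app \<Phi>enh :: "'b \<Rightarrow> real"
    and Cenh C :: real
  assumes "\<Theta> \<in> sets borel"
    and "prob_space \<mu>" and "sets \<mu> = sets (restrict_space borel \<Theta>)"
    and "bounded_linear Obs"
    and "M \<in> \<mu> \<rightarrow>\<^sub>M borel"
    and "pos_def_mat \<Sigma>"
    and "gaussian_measure G"
    and "\<Phi>app = (\<lambda>t. 1/2 * (wnorm (matrix_inv \<Sigma>) (y - Obs (M t)))\<^sup>2)"
    and "\<Phi>enh = (\<lambda>t. 1/2 * (wnorm (matrix_inv (\<Sigma> + Gamma_mat Obs G)) (y - Obs (M t) - Obs mE))\<^sup>2)"
    and "Cenh = op_norm (psd_sqrt (matrix_inv \<Sigma>) ** psd_sqrt (\<Sigma> + Gamma_mat Obs G))"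
    and "integrable \<mu> \<Phi>app" and "integrable \<mu> \<Phi>enh"
    and "C = exp (2 * (\<integral>t. \<bar>\<Phi>app t\<bar> \<partial>\<mu>) + 2 * (\<integral>t. \<bar>\<Phi>enh t\<bar> \<partial>\<mu>))
           * max (sqrt 2 * (sqrt (\<integral>t. \<bar>\<Phi>app t\<bar> \<partial>\<mu>) + Cenh * sqrt (\<integral>t. \<bar>\<Phi>enh t\<bar> \<partial>\<mu>))) 1"
  shows "max (d_KL (reweight \<mu> \<Phi>app) (reweight \<mu> \<Phi>enh))
             (d_KL (reweight \<mu> \<Phi>enh) (reweight \<mu> \<Phi>app))
         \<le> ereal (C * (wnorm (matrix_inv \<Sigma>) (Obs mE)
              + (\<integral>t. \<bar>wsq_diff (matrix_inv \<Sigma>) (matrix_inv (\<Sigma> + Gamma_mat Obs G))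
                         (y - Obs (M t) - Obs mE)\<bar> \<partial>\<mu>)))"
proof -
  interpret prob_space \<mu> by (rule assms(2))
  define r where "r t = y - Obs (M t)" for t
  have K: "pos_def_mat (\<Sigma> + Gamma_mat Obs G)"
    by (rule pos_def_mat_add_psd_mat[OF assms(6) psd_mat_Gamma_mat[OF assms(7,4)]])
  have r: "r \<in> borel_measurable \<mu>"
    using measurable_compose[OF assms(5) borel_measurable_continuous_onI[OF
        linear_continuous_on[OF assms(4)]]]
    by (simp add: r_def[abs_def] comp_def)
  have "\<Phi>app = (\<lambda>t. 1/2 * (wnorm (matrix_inv \<Sigma>) (r t))\<^sup>2)"
    and "\<Phi>enh = (\<lambda>t. 1/2 * (wnorm (matrix_inv (\<Sigma> + Gamma_mat Obs G)) (r t - Obs mE))\<^sup>2)"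
    using assms(8,9) by (simp_all add: r_def)
  note bound = d_KL_misfit_reweights_le[OF psd_mat_matrix_inv[OF assms(6)] K r this assms(11,12)]
  have "(\<integral>t. \<bar>\<Phi>app t\<bar> \<partial>\<mu>) = (\<integral>t. \<Phi>app t \<partial>\<mu>)" "(\<integral>t. \<bar>\<Phi>enh t\<bar> \<partial>\<mu>) = (\<integral>t. \<Phi>enh t \<partial>\<mu>)"
    by (simp_all add: assms(8,9))
  with bound show ?thesis by (simp add: assms(10,13) r_def)
qed

end
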